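(* Let $\lambda,R_c,H,\alpha_L>0$, $\alpha_N>2$, $m_L$ a positive integer and $\epsilon>0$. Let $\Phi$ be a homogeneous Poisson point process on $\mathbb{R}^2$ of intensity $\lambda$, $\Phi_o=\Phi\setminus\{y:\|y\|\le R_c\}$, $x_0=(r_0,0)$ with $0\le r_0\le R_c$, $r_1=\min_{y\in\Phi_o}\|y-x_0\|$ attained at $y_1$. Let $h_0=|g_0|^2(H^2+r_0^2)^{-\alpha_L/2}$ with $|g_0|^2\sim\mathrm{Gamma}(\text{shape }m_L,\text{rate }m_L)$, and for $y\in\Phi_o$ let $h_y=|g_y|^2\|y-x_0\|^{-\alpha_N}$ with i.i.d. $|g_y|^2\sim\mathrm{Exp}(1)$, all mutually independent and independent of $\Phi$. Let $h_1=h_{y_1}$, $I_2=\sum_{y\in\Phi_o\setminus\{y_1\}}h_y$, $\mathrm{SIR}_2=\frac{h_0+h_1}{I_2}$, $\mathcal{L}_{I_2|r_0,r_1}(s)=\mathbb{E}[e^{-sI_2}\mid r_1]$ and $\mathcal{L}^{(l)}_{I_2|r_0,r_1}$ its $l$-th derivative in $s$ ($\mathcal{L}^{(0)}=\mathcal{L}$). Put $\alpha_0=m_L$, $\beta_0=m_L(H^2+r_0^2)^{\alpha_L/2}$, $\alpha_1=1$, $\beta_1=r_1^{\alpha_N}$, $u_j=\beta_j\epsilon$, and $$A_{jk}=(-1)^{\alpha_j-k}\frac{\beta_0^{\alpha_0}\beta_1^{\alpha_1}(\alpha_{1-j}+\alpha_j-k-1)!}{(\alpha_j-k)!(\alpha_{1-j}-1)!}(\beta_{1-j}-\beta_j)^{-\alpha_{1-j}-\alpha_j+k}.$$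 Assume $r_1>R_c-r_0$ and $\beta_0\ne\beta_1$. Then $$P^2(r_0,r_1):=\Pr(\mathrm{SIR}_2>\epsilon\mid r_1)=\sum_{j=0}^{1}\sum_{k=1}^{\alpha_j}\frac{A_{jk}}{\beta_j^k}\sum_{l=0}^{k-1}\frac{(-u_j)^l}{l!}\mathcal{L}^{(l)}_{I_2|r_0,r_1}(u_j).$$
   Context: Here $\alpha_0,\alpha_1$ are the integers just defined (not path-loss exponents). A UAV at height $H$ above the center of the malfunction disc has a line-of-sight link to the user with Nakagami-$m_L$ fading and path-loss exponent $\alpha_L$; ground links are Rayleigh-faded with exponent $\alpha_N$. $\mathrm{SIR}_2$ is the signal-to-interference ratio when the user is cooperatively served by the UAV and its nearest ground base station. *)

theory Defs
  imports "HOL-Probability.Probability"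
begin

definition alph :: "nat \<Rightarrow> nat \<Rightarrow> nat" where
  "alph mL j = (if j = 0 then mL else 1)"

definition bet :: "real \<Rightarrow> real \<Rightarrow> nat \<Rightarrow> real" where
  "bet b0 b1 j = (if j = 0 then b0 else b1)"

definition coefA :: "nat \<Rightarrow> real \<Rightarrow> real \<Rightarrow> nat \<Rightarrow> nat \<Rightarrow> real" where
  "coefA mL b0 b1 j k =
     (-1) ^ (alph mL j - k) *
     (b0 ^ alph mL 0 * b1 ^ alph mL 1 * fact (alph mL (1 - j) + alph mL j - k - 1)
        / (fact (alph mL j - k) * fact (alph mL (1 - j) - 1)))
     * (bet b0 b1 (1 - j) - bet b0 b1 j)
         powi (- int (alph mL (1 - j)) - int (alph mL j) + int k)"

definition laplace_tr :: "'a measure \<Rightarrow> ('a \<Rightarrow> real) \<Rightarrow> real \<Rightarrow> real" where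
  "laplace_tr M X s = (\<integral>\<omega>. exp (- s * X \<omega>) \<partial>M)"

end

theory Submission
  imports Defs
begin

text \<open>
  Weighted by the path losses, the two useful gains become independent variables
  X0 = (m_L / beta_0) G0, Erlang of shape m_L and rate beta_0, and X1 = G1 / beta_1,
  exponential of rate beta_1, and both are independent of I2. Conditioning on I2 gives
  P(SIR_2 > eps) = E[F(eps I2)], where F(t) = P(X0 + X1 > t) is obtained by integrating
  the exponential tail against the Erlang density. F is a combination of the terms
  T_k(beta_j t) exp(-beta_j t), T_k the exponential series truncated after k terms, and a
  partial fraction identity shows that the coefficients are A_jk / beta_j^k. Finally
  E[(-I2)^l exp(-s I2)] is the l-th derivative of the Laplace transform of I2 at s, by
  dominated differentiation under the integral sign, since x^l exp(-s x) is bounded on x > 0.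
\<close>

section \<open>Differentiating a Laplace transform under the integral sign\<close>

lemma has_field_derivative_integral:
  fixes f f' :: "real \<Rightarrow> 'a \<Rightarrow> real"
  assumes r: "0 < r"
    and f_int: "\<And>t. t \<in> ball s r \<Longrightarrow> integrable M (f t)"
    and f'_meas: "f' s \<in> borel_measurable M"
    and deriv: "AE \<omega> in M. \<forall>t\<in>ball s r. ((\<lambda>t. f t \<omega>) has_field_derivative f' t \<omega>) (at t)"
    and bound: "AE \<omega> in M. \<forall>t\<in>ball s r. \<bar>f' t \<omega>\<bar> \<le> g \<omega>"
    and g: "integrable M g"
  shows "((\<lambda>t. \<integral>\<omega>. f t \<omega> \<partial>M) has_field_derivative (\<integral>\<omega>. f' s \<omega> \<partial>M)) (at s)"
proof -
  define q where "q h \<omega> = (f (s + h) \<omega> - f s \<omega>) / h" for h \<omega>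
  have int_q: "(\<integral>\<omega>. q h \<omega> \<partial>M) = ((\<integral>\<omega>. f (s + h) \<omega> \<partial>M) - (\<integral>\<omega>. f s \<omega> \<partial>M)) / h"
    if "s + h \<in> ball s r" for h
    using f_int[OF that] f_int[of s] r by (simp add: q_def)
  have q_bound: "AE \<omega> in M. \<bar>q h \<omega>\<bar> \<le> g \<omega>" if "s + h \<in> ball s r" "h \<noteq> 0" for h
    using deriv bound
  proof eventually_elim
    case (elim \<omega>)
    have "norm (f (s + h) \<omega> - f s \<omega>) \<le> g \<omega> * norm (s + h - s)"
      by (rule field_differentiable_bound[of "ball s r"])
         (use elim that r in \<open>auto intro: has_field_derivative_at_within\<close>)
    with that show ?case by (simp add: q_def divide_le_eq)
  qed
  have q_lim: "AE \<omega> in M. ((\<lambda>h. q h \<omega>) \<longlongrightarrow> f' s \<omega>) (at 0)"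
    using deriv by eventually_elim (use r in \<open>simp add: q_def DERIV_def\<close>)
  have "((\<lambda>h. \<integral>\<omega>. q h \<omega> \<partial>M) \<longlongrightarrow> (\<integral>\<omega>. f' s \<omega> \<partial>M)) (at 0)"
    unfolding tendsto_at_iff_sequentially comp_def
  proof (intro allI impI)
    fix X :: "nat \<Rightarrow> real"
    assume X: "\<forall>n. X n \<in> UNIV - {0}" "X \<longlonglongrightarrow> 0"
    obtain N where N: "\<And>n. N \<le> n \<Longrightarrow> \<bar>X n\<bar> < r"
      using X(2) r by (force dest!: tendstoD simp: eventually_sequentially dist_norm)
    show "(\<lambda>n. \<integral>\<omega>. q (X n) \<omega> \<partial>M) \<longlonglongrightarrow> (\<integral>\<omega>. f' s \<omega> \<partial>M)"
    proof (rule LIMSEQ_offset[of _ N], rule integral_dominated_convergence[where w=g])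
      show "AE \<omega> in M. norm (q (X (n + N)) \<omega>) \<le> g \<omega>" for n
        unfolding real_norm_def
      proof (rule q_bound)
        show "s + X (n + N) \<in> ball s r"
          using N[of "n + N"] by (simp add: dist_norm)
      qed (use X(1) in auto)
      show "AE \<omega> in M. (\<lambda>n. q (X (n + N)) \<omega>) \<longlonglongrightarrow> f' s \<omega>"
        using q_lim
      proof eventually_elim
        case (elim \<omega>)
        have "(\<lambda>n. q (X n) \<omega>) \<longlonglongrightarrow> f' s \<omega>"
          using elim X by (simp add: tendsto_at_iff_sequentially comp_def)
        then show ?case
          by (rule LIMSEQ_ignore_initial_segment)
      qed
      show "q (X (n + N)) \<in> borel_measurable M" for n
        unfolding q_def using f_int[of s] f_int[of "s + X (n + N)"] N[of "n + N"]
        by (simp add: dist_norm borel_measurable_integrable)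
      show "f' s \<in> borel_measurable M" by (rule f'_meas)
    qed (rule g)
  qed
  moreover have "\<forall>\<^sub>F h in at 0.
      (\<integral>\<omega>. q h \<omega> \<partial>M) = ((\<integral>\<omega>. f (s + h) \<omega> \<partial>M) - (\<integral>\<omega>. f s \<omega> \<partial>M)) / h"
    using r by (auto simp: eventually_at dist_norm int_q intro!: exI[of _ r])
  ultimately show ?thesis
    unfolding DERIV_def by (rule Lim_transform_eventually)
qed

lemma power_div_fact_le_exp:
  fixes x :: real
  assumes "0 \<le> x"
  shows "x ^ n / fact n \<le> exp x"
proof -
  have "x ^ n / fact n \<le> (\<Sum>k\<le>n. x ^ k / fact k)"
    by (rule member_le_sum) (use assms in auto)
  also have "\<dots> \<le> exp x"
    using assms summable_exp_generic[of x]
    by (auto simp: exp_def divide_inverse ac_simps intro!: sum_le_suminf)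
  finally show ?thesis .
qed

lemma power_mult_exp_le_fact:
  fixes x c :: real
  assumes "0 \<le> x" "0 < c"
  shows "x ^ n * exp (- c * x) \<le> fact n / c ^ n"
proof -
  have "(c * x) ^ n / fact n \<le> exp (c * x)"
    using assms by (intro power_div_fact_le_exp) simp
  then show ?thesis
    using assms by (simp add: exp_minus power_mult_distrib field_simps)
qed

context
  fixes M :: "'a measure" and X :: "'a \<Rightarrow> real"
  assumes M: "finite_measure M"
    and X_meas: "X \<in> borel_measurable M"
    and X_pos: "AE \<omega> in M. 0 < X \<omega>"
begin

lemma laplace_moment_bound:
  assumes "0 < t"
  shows "AE \<omega> in M. \<bar>(- X \<omega>) ^ l * exp (- t * X \<omega>)\<bar> \<le> fact l / t ^ l"
  using X_pos
proof eventually_elim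
  case (elim \<omega>)
  then show ?case
    using power_mult_exp_le_fact[of "X \<omega>" t l] assms by (simp add: abs_mult power_abs)
qed

lemma integrable_laplace_moment:
  assumes "0 < t"
  shows "integrable M (\<lambda>\<omega>. (- X \<omega>) ^ l * exp (- t * X \<omega>))"
proof -
  interpret finite_measure M by (rule M)
  show ?thesis
    using laplace_moment_bound[OF assms] X_meas
    by (intro integrable_const_bound[where B="fact l / t ^ l"]) auto
qed

lemma has_field_derivative_laplace_moment:
  assumes s: "0 < s"
  shows "((\<lambda>t. \<integral>\<omega>. (- X \<omega>) ^ l * exp (- t * X \<omega>) \<partial>M) has_field_derivative
           (\<integral>\<omega>. (- X \<omega>) ^ Suc l * exp (- s * X \<omega>) \<partial>M)) (at s)"
proof (rule has_field_derivative_integral[where r="s / 2" and g="\<lambda>_. fact (Suc l) / (s / 2) ^ Suc l"])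
  have ball: "s / 2 < t" if "t \<in> ball s (s / 2)" for t
    using that by (auto simp: dist_real_def abs_if split: if_splits)
  show "integrable M (\<lambda>\<omega>. (- X \<omega>) ^ l * exp (- t * X \<omega>))" if "t \<in> ball s (s / 2)" for t
    using ball[OF that] s by (intro integrable_laplace_moment) simp
  show "AE \<omega> in M. \<forall>t\<in>ball s (s / 2). ((\<lambda>t. (- X \<omega>) ^ l * exp (- t * X \<omega>)) has_field_derivative
           (- X \<omega>) ^ Suc l * exp (- t * X \<omega>)) (at t)"
    by (auto intro!: derivative_eq_intros)
  show "AE \<omega> in M. \<forall>t\<in>ball s (s / 2).
      \<bar>(- X \<omega>) ^ Suc l * exp (- t * X \<omega>)\<bar> \<le> fact (Suc l) / (s / 2) ^ Suc l"
    using X_pos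
  proof eventually_elim
    case (elim \<omega>)
    show ?case
    proof
      fix t assume "t \<in> ball s (s / 2)"
      then have "s / 2 \<le> t" using ball by fastforce
      with elim have "\<bar>(- X \<omega>) ^ Suc l * exp (- t * X \<omega>)\<bar>
          \<le> X \<omega> ^ Suc l * exp (- (s / 2) * X \<omega>)"
        by (auto simp: abs_mult power_abs intro!: mult_left_mono)
      also have "\<dots> \<le> fact (Suc l) / (s / 2) ^ Suc l"
        using elim s by (intro power_mult_exp_le_fact) auto
      finally show "\<bar>(- X \<omega>) ^ Suc l * exp (- t * X \<omega>)\<bar> \<le> fact (Suc l) / (s / 2) ^ Suc l" .
    qed
  qed
  show "(\<lambda>\<omega>. (- X \<omega>) ^ Suc l * exp (- s * X \<omega>)) \<in> borel_measurable M"
    using X_meas by measurable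
  interpret finite_measure M by (rule M)
  show "integrable M (\<lambda>_. fact (Suc l) / (s / 2) ^ Suc l)" by simp
qed (use s in simp)

lemma higher_deriv_laplace_tr:
  "0 < s \<Longrightarrow> (deriv ^^ l) (laplace_tr M X) s = (\<integral>\<omega>. (- X \<omega>) ^ l * exp (- s * X \<omega>) \<partial>M)"
proof (induction l arbitrary: s)
  case 0
  then show ?case by (simp add: laplace_tr_def)
next
  case (Suc l)
  have "((deriv ^^ l) (laplace_tr M X) has_field_derivative
           (\<integral>\<omega>. (- X \<omega>) ^ Suc l * exp (- s * X \<omega>) \<partial>M)) (at s)"
    by (rule has_field_derivative_transform_within_open
          [OF has_field_derivative_laplace_moment[OF Suc.prems], where S="{0<..}"])
       (use Suc in auto)
  then show ?case by (simp add: DERIV_imp_deriv)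
qed

end

section \<open>Truncated exponential series\<close>

definition exp_taylor :: "nat \<Rightarrow> real \<Rightarrow> real" where
  "exp_taylor m z = (\<Sum>n<m. z ^ n / fact n)"

lemma exp_taylor_Suc: "exp_taylor (Suc m) z = exp_taylor m z + z ^ m / fact m"
  by (simp add: exp_taylor_def)

lemma exp_taylor_at_0: "0 < m \<Longrightarrow> exp_taylor m 0 = 1"
  by (cases m) (simp_all add: exp_taylor_def sum.lessThan_Suc_shift del: sum.lessThan_Suc)

lemma exp_taylor_nonneg: "0 \<le> z \<Longrightarrow> 0 \<le> exp_taylor m z"
  by (simp add: exp_taylor_def sum_nonneg)

lemma has_real_derivative_exp_taylor:
  "((\<lambda>z. exp (- z) * exp_taylor (Suc n) z) has_real_derivative - exp (- z) * z ^ n / fact n) (at z)"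
proof (induction n)
  case 0
  show ?case by (simp add: exp_taylor_def) (auto intro!: derivative_eq_intros)
next
  case (Suc n)
  have "((\<lambda>z. exp (- z)) has_real_derivative - exp (- z)) (at z)"
    by (auto intro!: derivative_eq_intros)
  moreover have "((\<lambda>z. z ^ Suc n / fact (Suc n)) has_real_derivative z ^ n / fact n) (at z)"
    using DERIV_cdivide[OF DERIV_pow[of "Suc n" z], of "fact (Suc n)"] by (simp add: fact_Suc)
  ultimately have "((\<lambda>z. exp (- z) * exp_taylor (Suc n) z + exp (- z) * (z ^ Suc n / fact (Suc n)))
      has_real_derivative - exp (- z) * z ^ n / fact n
        + (- exp (- z) * (z ^ Suc n / fact (Suc n)) + z ^ n / fact n * exp (- z))) (at z)"
    by (intro DERIV_add[OF Suc.IH] DERIV_mult)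
  then show ?case
    by (simp add: exp_taylor_Suc[of "Suc n"] distrib_left)
qed

lemma exp_taylor_mult_exp_eq_sum:
  "exp_taylor k (u * x) * exp (- u * x) = (\<Sum>l<k. (- u) ^ l / fact l * ((- x) ^ l * exp (- u * x)))"
  unfolding exp_taylor_def sum_distrib_right
proof (rule sum.cong)
  fix l
  have "(- u) ^ l * (- x) ^ l = (u * x) ^ l"
    by (simp add: power_mult_distrib[symmetric])
  then show "(u * x) ^ l / fact l * exp (- u * x) = (- u) ^ l / fact l * ((- x) ^ l * exp (- u * x))"
    by (simp add: field_simps)
qed simp

lemma exp_taylor_partial_fraction:
  fixes b0 b1 t :: real
  assumes "b0 \<noteq> b1"
  shows "exp_taylor m (b0 * t) - (b0 / (b0 - b1)) ^ m * exp_taylor m ((b0 - b1) * t)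
    = - (\<Sum>k = 1..m. b1 * b0 ^ (m - k) / (b0 - b1) ^ Suc (m - k) * exp_taylor k (b0 * t))"
proof (induction m)
  case 0
  show ?case by (simp add: exp_taylor_def)
next
  case (Suc m)
  define d where "d = b0 - b1"
  define r where "r = b0 / d"
  have d: "d \<noteq> 0" using assms by (simp add: d_def)
  have shift: "(\<Sum>k = 1..Suc m. b1 * b0 ^ (Suc m - k) / d ^ Suc (Suc m - k) * exp_taylor k (b0 * t))
      = r * (\<Sum>k = 1..m. b1 * b0 ^ (m - k) / d ^ Suc (m - k) * exp_taylor k (b0 * t))
        + b1 / d * exp_taylor (Suc m) (b0 * t)"
  proof -
    have "(\<Sum>k = 1..m. b1 * b0 ^ (Suc m - k) / d ^ Suc (Suc m - k) * exp_taylor k (b0 * t))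
        = r * (\<Sum>k = 1..m. b1 * b0 ^ (m - k) / d ^ Suc (m - k) * exp_taylor k (b0 * t))"
      unfolding r_def sum_distrib_left by (intro sum.cong refl) (auto simp: Suc_diff_le field_simps)
    then show ?thesis by simp
  qed
  define S where "S = (\<Sum>k = 1..m. b1 * b0 ^ (m - k) / d ^ Suc (m - k) * exp_taylor k (b0 * t))"
  have IH: "r ^ m * exp_taylor m (d * t) = exp_taylor m (b0 * t) + S"
    using Suc.IH by (simp add: S_def d_def r_def)
  define x where "x = (b0 * t) ^ m / fact m"
  define y where "y = (d * t) ^ m / fact m"
  have last: "r ^ m * y = x"
    using d by (simp add: x_def y_def r_def power_mult_distrib field_simps)
  have r: "1 - r = - (b1 / d)"
    using d by (simp add: r_def d_def field_simps)
  have "exp_taylor (Suc m) (b0 * t) - r ^ Suc m * exp_taylor (Suc m) (d * t)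
      = (1 - r) * exp_taylor (Suc m) (b0 * t) - r * S"
    unfolding exp_taylor_Suc x_def[symmetric] y_def[symmetric] power_Suc
    using IH last by (simp add: algebra_simps)
  then show ?case
    unfolding d_def[symmetric] r_def[symmetric] shift r S_def[symmetric] by simp
qed

section \<open>Integrating an exponential weight against an Erlang density\<close>

definition erlang_exp_integral :: "nat \<Rightarrow> real \<Rightarrow> real \<Rightarrow> real \<Rightarrow> real" where
  "erlang_exp_integral k l c a =
     (l / (l - c)) ^ Suc k * (1 - exp (- ((l - c) * a)) * exp_taylor (Suc k) ((l - c) * a))"

lemma erlang_exp_integral_0 [simp]: "erlang_exp_integral k l c 0 = 0"
  by (simp add: erlang_exp_integral_def exp_taylor_at_0)

lemma has_real_derivative_erlang_exp_integral:
  assumes "c \<noteq> l" "0 \<le> x"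
  shows "(erlang_exp_integral k l c has_real_derivative erlang_density k l x * exp (c * x)) (at x)"
proof -
  define d where "d = l - c"
  have d: "d \<noteq> 0" using assms by (simp add: d_def)
  have "((\<lambda>a. exp (- (d * a)) * exp_taylor (Suc k) (d * a)) has_real_derivative
          - exp (- (d * x)) * (d * x) ^ k / fact k * d) (at x)"
    by (rule DERIV_chain2[OF has_real_derivative_exp_taylor]) (auto intro!: derivative_eq_intros)
  from DERIV_cmult[OF DERIV_diff[OF DERIV_const this], of "(l / d) ^ Suc k"]
  have "(erlang_exp_integral k l c has_real_derivative
          (l / d) ^ Suc k * (exp (- (d * x)) * (d * x) ^ k / fact k * d)) (at x)"
    unfolding erlang_exp_integral_def d_def[symmetric] by simp
  moreover have "(l / d) ^ Suc k * (exp (- (d * x)) * (d * x) ^ k / fact k * d)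
      = erlang_density k l x * exp (c * x)"
  proof -
    have "exp (- (d * x)) = exp (- l * x) * exp (c * x)"
      by (simp add: d_def exp_add[symmetric] algebra_simps)
    then show ?thesis
      using d assms(2) by (simp add: erlang_density_def power_mult_distrib power_divide field_simps)
  qed
  ultimately show ?thesis by simp
qed

lemma erlang_exp_integral_nonneg:
  assumes "c \<noteq> l" "0 \<le> l" "0 \<le> a"
  shows "0 \<le> erlang_exp_integral k l c a"
proof -
  have "erlang_exp_integral k l c 0 \<le> erlang_exp_integral k l c a"
  proof (rule DERIV_nonneg_imp_nondecreasing[OF assms(3)])
    fix x :: real assume "0 \<le> x"
    then show "\<exists>y. (erlang_exp_integral k l c has_real_derivative y) (at x) \<and> 0 \<le> y"
      using assms has_real_derivative_erlang_exp_integral by fastforce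
  qed
  then show ?thesis by simp
qed

lemma nn_integral_erlang_density_mult_exp:
  assumes "c \<noteq> l" "0 \<le> l" "0 \<le> a"
  shows "(\<integral>\<^sup>+x. ennreal (erlang_density k l x * exp (c * x)) * indicator {0..a} x \<partial>lborel)
    = ennreal (erlang_exp_integral k l c a)"
  using assms has_real_derivative_erlang_exp_integral[OF assms(1)]
  by (subst nn_integral_FTC_Icc[where F="erlang_exp_integral k l c"]) auto

section \<open>Conditioning on an independent variable\<close>

lemma (in prob_space) emeasure_indep_pair:
  assumes ind: "indep_var N X N' Y" and S: "S \<in> sets (N \<Otimes>\<^sub>M N')"
  shows "emeasure M {\<omega> \<in> space M. (X \<omega>, Y \<omega>) \<in> S}
    = (\<integral>\<^sup>+x. emeasure (distr M N' Y) (Pair x -` S) \<partial>distr M N X)"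
proof -
  have [measurable]: "X \<in> measurable M N" "Y \<in> measurable M N'"
    using ind by (auto dest: indep_var_rv1 indep_var_rv2)
  interpret Y: prob_space "distr M N' Y" by (rule prob_space_distr) measurable
  have "emeasure M {\<omega> \<in> space M. (X \<omega>, Y \<omega>) \<in> S}
      = emeasure (distr M (N \<Otimes>\<^sub>M N') (\<lambda>\<omega>. (X \<omega>, Y \<omega>))) S"
    using S by (subst emeasure_distr) (auto intro!: arg_cong[where f="emeasure M"])
  also have "\<dots> = emeasure (distr M N X \<Otimes>\<^sub>M distr M N' Y) S"
    using ind by (simp add: indep_var_distribution_eq)
  also have "\<dots> = (\<integral>\<^sup>+x. emeasure (distr M N' Y) (Pair x -` S) \<partial>distr M N X)"
  proof (rule Y.emeasure_pair_measure_alt)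
    have "sets (distr M N X \<Otimes>\<^sub>M distr M N' Y) = sets (N \<Otimes>\<^sub>M N')"
      by (intro sets_pair_measure_cong) simp_all
    with S show "S \<in> sets (distr M N X \<Otimes>\<^sub>M distr M N' Y)" by simp
  qed
  finally show ?thesis .
qed

lemma (in prob_space) prob_indep_pair:
  assumes ind: "indep_var N X N' Y" and S: "S \<in> sets (N \<Otimes>\<^sub>M N')"
  shows "prob {\<omega> \<in> space M. (X \<omega>, Y \<omega>) \<in> S}
    = (\<integral>\<omega>. measure (distr M N' Y) (Pair (X \<omega>) -` S) \<partial>M)"
proof -
  have [measurable]: "X \<in> measurable M N" "Y \<in> measurable M N'"
    using ind by (auto dest: indep_var_rv1 indep_var_rv2)
  interpret Y: prob_space "distr M N' Y" by (rule prob_space_distr) measurable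
  have S': "S \<in> sets (N \<Otimes>\<^sub>M distr M N' Y)"
    using S sets_pair_measure_cong[of N N "distr M N' Y" N'] by simp
  have sec_meas: "(\<lambda>x. emeasure (distr M N' Y) (Pair x -` S)) \<in> borel_measurable N"
    by (rule Y.measurable_emeasure_Pair[OF S'])
  then have [measurable]: "(\<lambda>x. measure (distr M N' Y) (Pair x -` S)) \<in> borel_measurable N"
    unfolding measure_def by measurable
  have "emeasure M {\<omega> \<in> space M. (X \<omega>, Y \<omega>) \<in> S}
      = (\<integral>\<^sup>+\<omega>. ennreal (measure (distr M N' Y) (Pair (X \<omega>) -` S)) \<partial>M)"
    unfolding emeasure_indep_pair[OF assms] Y.emeasure_eq_measure
    by (rule nn_integral_distr) simp_all
  also have "\<dots> = ennreal (\<integral>\<omega>. measure (distr M N' Y) (Pair (X \<omega>) -` S) \<partial>M)"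
  proof (rule nn_integral_eq_integral)
    show "integrable M (\<lambda>\<omega>. measure (distr M N' Y) (Pair (X \<omega>) -` S))"
      by (rule integrable_const_bound[where B=1]) simp_all
  qed simp
  finally show ?thesis
    by (simp add: emeasure_eq_measure integral_nonneg)
qed

lemma (in prob_space) indep_var_from_indep_vars:
  assumes ind: "indep_vars (\<lambda>_. N) X I" and "i \<in> I" "j \<in> I" "i \<noteq> j"
  shows "indep_var N (X i) N (X j)"
proof -
  have "indep_var (PiM {i} (\<lambda>_. N)) (\<lambda>\<omega>. restrict (\<lambda>i. X i \<omega>) {i})
      (PiM {j} (\<lambda>_. N)) (\<lambda>\<omega>. restrict (\<lambda>i. X i \<omega>) {j})"
    using assms by (intro indep_var_restrict[OF ind]) auto
  from indep_var_compose[OF this measurable_component_singleton measurable_component_singleton]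
  show ?thesis by (simp add: comp_def)
qed

lemma (in prob_space) indep_var_from_indep_vars_combination:
  assumes ind: "indep_vars (\<lambda>_. N) X I" and "i \<in> I" "j \<in> I" "k \<in> I" "i \<noteq> j" "i \<noteq> k"
    and f: "case_prod f \<in> measurable (N \<Otimes>\<^sub>M N) N"
  shows "indep_var N (X i) N (\<lambda>\<omega>. f (X j \<omega>) (X k \<omega>))"
proof -
  have "indep_var (PiM {i} (\<lambda>_. N)) (\<lambda>\<omega>. restrict (\<lambda>i. X i \<omega>) {i})
      (PiM {j, k} (\<lambda>_. N)) (\<lambda>\<omega>. restrict (\<lambda>i. X i \<omega>) {j, k})"
    using assms by (intro indep_var_restrict[OF ind]) auto
  moreover have "(\<lambda>g. f (g j) (g k)) \<in> measurable (PiM {j, k} (\<lambda>_. N)) N"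
    using measurable_compose[OF _ f, of "\<lambda>g. (g j, g k)"] by simp
  ultimately have "indep_var N ((\<lambda>g. g i) \<circ> (\<lambda>\<omega>. restrict (\<lambda>i. X i \<omega>) {i}))
      N ((\<lambda>g. f (g j) (g k)) \<circ> (\<lambda>\<omega>. restrict (\<lambda>i. X i \<omega>) {j, k}))"
    by (intro indep_var_compose measurable_component_singleton) auto
  then show ?thesis by (simp add: comp_def)
qed

lemma (in prob_space) prob_ratio_gt:
  fixes X Z :: "'a \<Rightarrow> real"
  assumes ind: "indep_var borel X borel Z" and X_pos: "AE \<omega> in M. 0 < X \<omega>"
    and F: "\<And>t. 0 \<le> t \<Longrightarrow> prob {\<omega> \<in> space M. t < Z \<omega>} = F t"
    and F_meas: "F \<in> borel_measurable borel" and eps: "0 \<le> eps"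
  shows "prob {\<omega> \<in> space M. eps < Z \<omega> / X \<omega>} = (\<integral>\<omega>. F (eps * X \<omega>) \<partial>M)"
proof -
  have [measurable]: "X \<in> borel_measurable M" "Z \<in> borel_measurable M"
    using ind by (auto dest: indep_var_rv1 indep_var_rv2)
  define S where "S = {p :: real \<times> real. eps < snd p / fst p}"
  have "S = {p \<in> space (borel \<Otimes>\<^sub>M borel). eps < snd p / fst p}"
    by (auto simp: S_def space_pair_measure)
  also have "\<dots> \<in> sets (borel \<Otimes>\<^sub>M borel)"
    by measurable
  finally have S: "S \<in> sets (borel \<Otimes>\<^sub>M borel)" .
  have "prob {\<omega> \<in> space M. eps < Z \<omega> / X \<omega>}
      = (\<integral>\<omega>. measure (distr M borel Z) (Pair (X \<omega>) -` S) \<partial>M)"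
    using prob_indep_pair[OF ind S] by (simp add: S_def)
  also have "\<dots> = (\<integral>\<omega>. F (eps * X \<omega>) \<partial>M)"
  proof (rule integral_cong_AE)
    show "AE \<omega> in M. measure (distr M borel Z) (Pair (X \<omega>) -` S) = F (eps * X \<omega>)"
      using X_pos
    proof eventually_elim
      case (elim \<omega>)
      have "measure (distr M borel Z) (Pair (X \<omega>) -` S) = prob {\<omega>' \<in> space M. eps * X \<omega> < Z \<omega>'}"
        using elim by (subst measure_distr) (auto simp: S_def field_simps intro!: arg_cong[where f=prob])
      also have "\<dots> = F (eps * X \<omega>)"
        using elim eps by (intro F) simp
      finally show ?case .
    qed
    interpret Z: prob_space "distr M borel Z" by (rule prob_space_distr) measurable
    have "(\<lambda>x. emeasure (distr M borel Z) (Pair x -` S)) \<in> borel_measurable borel"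
      using S sets_pair_measure_cong[of borel borel "distr M borel Z" borel]
      by (intro Z.measurable_emeasure_Pair) simp
    then have "(\<lambda>x. measure (distr M borel Z) (Pair x -` S)) \<in> borel_measurable borel"
      unfolding measure_def by measurable
    then show "(\<lambda>\<omega>. measure (distr M borel Z) (Pair (X \<omega>) -` S)) \<in> borel_measurable M"
      by measurable
  qed (use F_meas in measurable)
  finally show ?thesis .
qed

section \<open>The tail of an Erlang plus an independent exponential variable\<close>

lemma one_minus_erlang_CDF:
  "0 \<le> t \<Longrightarrow> 1 - erlang_CDF k l t = exp_taylor (Suc k) (l * t) * exp (- l * t)"
  by (simp add: erlang_CDF_def exp_taylor_def lessThan_Suc_atMost sum_distrib_right)

lemma (in prob_space) prob_exponential_gt:
  assumes D: "distributed M lborel Y (exponential_density \<mu>)" and \<mu>: "0 < \<mu>"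
  shows "prob {\<omega> \<in> space M. a < Y \<omega>} = exp (- \<mu> * max a 0)"
proof (cases "0 \<le> a")
  case True
  then show ?thesis using exponential_distributedD_gt[OF D True \<mu>] by (simp add: mult.commute)
next
  case False
  have [measurable]: "Y \<in> borel_measurable M"
    using distributed_measurable[OF D] by simp
  have "1 = prob {\<omega> \<in> space M. 0 < Y \<omega>}"
    using exponential_distributedD_gt[OF D _ \<mu>, of 0] by simp
  also have "\<dots> \<le> prob {\<omega> \<in> space M. a < Y \<omega>}"
    using False by (intro finite_measure_mono) auto
  finally show ?thesis
    using False prob_le_1[of "{\<omega> \<in> space M. a < Y \<omega>}"] by simp
qed

definition erlang_exp_ccdf :: "nat \<Rightarrow> real \<Rightarrow> real \<Rightarrow> real \<Rightarrow> real" where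
  "erlang_exp_ccdf k l \<mu> t =
     exp_taylor (Suc k) (l * t) * exp (- l * t) + exp (- \<mu> * t) * erlang_exp_integral k l \<mu> t"

lemma (in prob_space) emeasure_indep_sum_gt:
  fixes X Y :: "'a \<Rightarrow> real"
  assumes ind: "indep_var borel X borel Y"
  shows "emeasure M {\<omega> \<in> space M. t < X \<omega> + Y \<omega>}
    = (\<integral>\<^sup>+x. ennreal (prob {\<omega> \<in> space M. t - x < Y \<omega>}) \<partial>distr M borel X)"
proof -
  have [measurable]: "Y \<in> borel_measurable M"
    using ind by (auto dest: indep_var_rv2)
  define S where "S = {p :: real \<times> real. t < fst p + snd p}"
  have "S = {p \<in> space (borel \<Otimes>\<^sub>M borel). t < fst p + snd p}"
    by (auto simp: S_def space_pair_measure)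
  also have "\<dots> \<in> sets (borel \<Otimes>\<^sub>M borel)"
    by measurable
  finally have S: "S \<in> sets (borel \<Otimes>\<^sub>M borel)" .
  have "emeasure (distr M borel Y) (Pair x -` S) = ennreal (prob {\<omega> \<in> space M. t - x < Y \<omega>})" for x
    by (subst emeasure_distr)
       (auto simp: S_def emeasure_eq_measure intro!: arg_cong[where f=prob])
  then show ?thesis
    using emeasure_indep_pair[OF ind S] by (simp add: S_def)
qed

lemma erlang_density_mult_exp_tail_split:
  fixes t x :: real
  assumes "0 \<le> t" "0 \<le> l"
  shows "ennreal (erlang_density k l x) * ennreal (exp (- \<mu> * max (t - x) 0))
    = ennreal (erlang_density k l x) * indicator {t<..} x
      + ennreal (exp (- \<mu> * t)) * (ennreal (erlang_density k l x * exp (\<mu> * x)) * indicator {0..t} x)"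
proof -
  consider "x < 0" | "t < x" | "0 \<le> x" "x \<le> t" by linarith
  then show ?thesis
  proof cases
    case 1
    then show ?thesis using assms by (simp add: erlang_density_def indicator_def)
  next
    case 2
    then show ?thesis using assms by (simp add: indicator_def)
  next
    case 3
    have "exp (- \<mu> * (t - x)) = exp (- \<mu> * t) * exp (\<mu> * x)"
      by (simp add: exp_add[symmetric] algebra_simps)
    with 3 assms show ?thesis
      by (simp add: indicator_def ennreal_mult'[symmetric] mult.left_commute)
  qed
qed

lemma (in prob_space) prob_erlang_plus_exponential_gt:
  assumes ind: "indep_var borel X borel Y"
    and DX: "distributed M lborel X (erlang_density k l)"
    and DY: "distributed M lborel Y (exponential_density \<mu>)"
    and l: "0 < l" and \<mu>: "0 < \<mu>" and "l \<noteq> \<mu>" and t: "0 \<le> t"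
  shows "prob {\<omega> \<in> space M. t < X \<omega> + Y \<omega>} = erlang_exp_ccdf k l \<mu> t"
proof -
  have "emeasure M {\<omega> \<in> space M. t < X \<omega> + Y \<omega>}
      = (\<integral>\<^sup>+x. ennreal (exp (- \<mu> * max (t - x) 0)) \<partial>distr M lborel X)"
    using emeasure_indep_sum_gt[OF ind] distr_cong[OF refl sets_lborel[symmetric], of M X X]
    by (simp add: prob_exponential_gt[OF DY \<mu>])
  also have "\<dots>
      = (\<integral>\<^sup>+x. ennreal (erlang_density k l x) * ennreal (exp (- \<mu> * max (t - x) 0)) \<partial>lborel)"
    unfolding distributed_distr_eq_density[OF DX] by (rule nn_integral_density) auto
  also have "\<dots> = (\<integral>\<^sup>+x. ennreal (erlang_density k l x) * indicator {t<..} x \<partial>lborel)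
      + ennreal (exp (- \<mu> * t)) *
        (\<integral>\<^sup>+x. ennreal (erlang_density k l x * exp (\<mu> * x)) * indicator {0..t} x \<partial>lborel)"
    unfolding erlang_density_mult_exp_tail_split[OF t less_imp_le[OF l]] by (simp add: nn_integral_add nn_integral_cmult)
  also have "(\<integral>\<^sup>+x. ennreal (erlang_density k l x) * indicator {t<..} x \<partial>lborel)
      = emeasure M {\<omega> \<in> space M. t < X \<omega>}"
    by (subst distributed_emeasure[OF DX, symmetric]) (auto intro!: arg_cong[where f="emeasure M"])
  also have "\<dots> = ennreal (exp_taylor (Suc k) (l * t) * exp (- l * t))"
    using erlang_distributed_gt[OF DX l t] by (simp add: emeasure_eq_measure one_minus_erlang_CDF[OF t])
  also have "(\<integral>\<^sup>+x. ennreal (erlang_density k l x * exp (\<mu> * x)) * indicator {0..t} x \<partial>lborel)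
      = ennreal (erlang_exp_integral k l \<mu> t)"
    using \<open>l \<noteq> \<mu>\<close> l t by (intro nn_integral_erlang_density_mult_exp) auto
  also have "ennreal (exp_taylor (Suc k) (l * t) * exp (- l * t))
      + ennreal (exp (- \<mu> * t)) * ennreal (erlang_exp_integral k l \<mu> t)
      = ennreal (erlang_exp_ccdf k l \<mu> t)"
    using erlang_exp_integral_nonneg[of \<mu> l t k] exp_taylor_nonneg[of "l * t" "Suc k"] assms
    unfolding erlang_exp_ccdf_def
    by (simp only: ennreal_mult[symmetric] ennreal_plus[symmetric] mult_nonneg_nonneg exp_ge_zero)
  finally have "ennreal (prob {\<omega> \<in> space M. t < X \<omega> + Y \<omega>}) = ennreal (erlang_exp_ccdf k l \<mu> t)"
    by (simp only: emeasure_eq_measure)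
  moreover have "0 \<le> erlang_exp_ccdf k l \<mu> t"
    using erlang_exp_integral_nonneg[of \<mu> l t k] exp_taylor_nonneg[of "l * t" "Suc k"] assms
    unfolding erlang_exp_ccdf_def by simp
  ultimately show ?thesis
    by (simp add: ennreal_inj)
qed

lemma (in prob_space) prob_weighted_sum_ratio_gt:
  fixes G0 G1 I :: "'a \<Rightarrow> real"
  assumes ind: "indep_vars (\<lambda>_. borel) (\<lambda>i::nat. if i = 0 then G0 else if i = 1 then G1 else I) {0, 1, 2}"
    and D0: "distributed M lborel G0 (erlang_density k l)"
    and D1: "distributed M lborel G1 (exponential_density \<mu>)"
    and I_pos: "AE \<omega> in M. 0 < I \<omega>"
    and l: "0 < l" and \<mu>: "0 < \<mu>" and a: "0 < a" and b: "0 < b"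
    and ne: "l / a \<noteq> \<mu> / b" and eps: "0 \<le> eps"
  shows "prob {\<omega> \<in> space M. eps < (a * G0 \<omega> + b * G1 \<omega>) / I \<omega>}
    = (\<integral>\<omega>. erlang_exp_ccdf k (l / a) (\<mu> / b) (eps * I \<omega>) \<partial>M)"
proof (rule prob_ratio_gt[OF _ I_pos _ _ eps])
  show "indep_var borel I borel (\<lambda>\<omega>. a * G0 \<omega> + b * G1 \<omega>)"
    using indep_var_from_indep_vars_combination[OF ind, of 2 0 1 "\<lambda>x y. a * x + b * y"] by simp
  have "indep_var borel G0 borel G1"
    using indep_var_from_indep_vars[OF ind, of 0 1] by simp
  then have ind01: "indep_var borel (\<lambda>\<omega>. a * G0 \<omega>) borel (\<lambda>\<omega>. b * G1 \<omega>)"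
    using indep_var_compose[of borel G0 borel G1 "\<lambda>x. a * x" borel "\<lambda>x. b * x" borel]
    by (simp add: comp_def)
  show "prob {\<omega> \<in> space M. t < a * G0 \<omega> + b * G1 \<omega>} = erlang_exp_ccdf k (l / a) (\<mu> / b) t"
    if "0 \<le> t" for t
    using erlang_distributed_mult_const[OF D0 a l] erlang_distributed_mult_const[OF D1 b \<mu>]
      l \<mu> a b ne that
    by (intro prob_erlang_plus_exponential_gt[OF ind01]) auto
  show "erlang_exp_ccdf k (l / a) (\<mu> / b) \<in> borel_measurable borel"
    unfolding erlang_exp_ccdf_def erlang_exp_integral_def exp_taylor_def by measurable
qed

section \<open>Partial fractions and the Laplace expansion\<close>

lemma coefA_1_1: "0 < m \<Longrightarrow> coefA m b0 b1 1 1 = b0 ^ m * b1 / (b0 - b1) ^ m"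
  by (simp add: coefA_def alph_def bet_def power_int_minus divide_simps)

lemma neg_one_power_mult_power_int_minus:
  fixes a :: real
  assumes "a \<noteq> 0"
  shows "(-1) ^ n * (- a) powi (- int (Suc n)) = - (1 / a ^ Suc n)"
proof -
  have sign: "(-1) ^ n * (-1) ^ n = (1 :: real)"
    by (simp add: power_add[symmetric])
  have "(- a) powi (- int (Suc n)) = 1 / ((-1) ^ Suc n * a ^ Suc n)"
    by (simp only: power_int_minus_divide power_int_of_nat power_minus[of a])
  also have "\<dots> = (-1) ^ Suc n * (1 / a ^ Suc n)"
    by (cases "even n") simp_all
  finally have "(- a) powi (- int (Suc n)) = (-1) ^ Suc n * (1 / a ^ Suc n)" .
  then show ?thesis
    using sign by (simp add: mult.assoc[symmetric])
qed

lemma coefA_0: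
  assumes "1 \<le> k" "k \<le> m" "b0 \<noteq> b1"
  shows "coefA m b0 b1 0 k = - (b0 ^ m * b1 / (b0 - b1) ^ Suc (m - k))"
proof -
  have index: "alph m 0 = m" "alph m (1 - 0) = 1" "alph m 1 = 1" "bet b0 b1 (1 - 0) = b1" "bet b0 b1 0 = b0"
    by (simp_all add: alph_def bet_def)
  have exponent: "- int 1 - int m + int k = - int (Suc (m - k))" "1 + m - k - 1 = m - k"
    using assms by simp_all
  have "coefA m b0 b1 0 k = b0 ^ m * b1 ^ 1 * fact (m - k) / (fact (m - k) * fact (1 - 1))
      * ((-1) ^ (m - k) * (- (b0 - b1)) powi (- int (Suc (m - k))))"
    unfolding coefA_def index exponent minus_diff_eq[of b0 b1, symmetric] by (simp only: ac_simps)
  also have "(-1) ^ (m - k) * (- (b0 - b1)) powi (- int (Suc (m - k))) = - (1 / (b0 - b1) ^ Suc (m - k))"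
    using assms by (intro neg_one_power_mult_power_int_minus) simp
  finally show ?thesis by simp
qed

lemma coefA_sum_1:
  assumes "0 < m" "b0 \<noteq> b1" "b1 \<noteq> 0"
  shows "(\<Sum>k = 1..alph m 1. coefA m b0 b1 1 k / bet b0 b1 1 ^ k *
      (exp_taylor k (bet b0 b1 1 * t) * exp (- bet b0 b1 1 * t))) = (b0 / (b0 - b1)) ^ m * exp (- b1 * t)"
  using assms coefA_1_1[of m b0 b1] by (simp add: alph_def bet_def exp_taylor_def power_divide)

lemma coefA_sum_0:
  assumes "b0 \<noteq> b1" "b0 \<noteq> 0"
  shows "(\<Sum>k = 1..alph m 0. coefA m b0 b1 0 k / bet b0 b1 0 ^ k *
      (exp_taylor k (bet b0 b1 0 * t) * exp (- bet b0 b1 0 * t)))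
    = exp (- b0 * t) *
      (exp_taylor m (b0 * t) - (b0 / (b0 - b1)) ^ m * exp_taylor m ((b0 - b1) * t))"
proof -
  have alph_0: "alph m 0 = m" and bet_0: "bet b0 b1 0 = b0"
    by (simp_all add: alph_def bet_def)
  have "(\<Sum>k = 1..alph m 0. coefA m b0 b1 0 k / bet b0 b1 0 ^ k *
      (exp_taylor k (bet b0 b1 0 * t) * exp (- bet b0 b1 0 * t)))
    = - exp (- b0 * t) *
      (\<Sum>k = 1..m. b1 * b0 ^ (m - k) / (b0 - b1) ^ Suc (m - k) * exp_taylor k (b0 * t))"
    unfolding sum_distrib_left alph_0 bet_0
  proof (intro sum.cong refl)
    fix k assume k: "k \<in> {1..m}"
    then have "b0 ^ m = b0 ^ (m - k) * b0 ^ k" by (simp add: power_add[symmetric])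
    with k assms show "coefA m b0 b1 0 k / b0 ^ k * (exp_taylor k (b0 * t) * exp (- b0 * t))
        = - exp (- b0 * t) * (b1 * b0 ^ (m - k) / (b0 - b1) ^ Suc (m - k) * exp_taylor k (b0 * t))"
      by (simp add: coefA_0 field_simps)
  qed
  with exp_taylor_partial_fraction[OF assms(1), of m t] show ?thesis
    by simp
qed

lemma erlang_exp_ccdf_eq_coefA_sum:
  assumes m: "0 < m" and ne: "b0 \<noteq> b1" and "b0 \<noteq> 0" "b1 \<noteq> 0"
  shows "erlang_exp_ccdf (m - 1) b0 b1 t
    = (\<Sum>j\<in>{0::nat, 1}. \<Sum>k = 1..alph m j. coefA m b0 b1 j k / bet b0 b1 j ^ k *
         (exp_taylor k (bet b0 b1 j * t) * exp (- bet b0 b1 j * t)))"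
proof -
  define d where "d = b0 - b1"
  have "exp (- b1 * t) * exp (- (d * t)) = exp (- b0 * t)"
    by (simp add: d_def flip: exp_add) (simp add: algebra_simps)
  then have "erlang_exp_ccdf (m - 1) b0 b1 t
      = exp (- b0 * t) * (exp_taylor m (b0 * t) - (b0 / d) ^ m * exp_taylor m (d * t))
        + (b0 / d) ^ m * exp (- b1 * t)"
    using m unfolding erlang_exp_ccdf_def erlang_exp_integral_def d_def[symmetric]
    by (simp add: right_diff_distrib mult.assoc[symmetric])
  then show ?thesis
    using coefA_sum_0[OF ne assms(3), of m t] coefA_sum_1[OF m ne assms(4), of t]
    by (simp add: d_def)
qed

lemma integral_erlang_exp_ccdf_eq_laplace_sum:
  fixes X :: "'a \<Rightarrow> real"
  assumes M: "finite_measure M" and X_meas: "X \<in> borel_measurable M" and X_pos: "AE \<omega> in M. 0 < X \<omega>"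
    and m: "0 < m" and b0: "0 < b0" and b1: "0 < b1" and ne: "b0 \<noteq> b1" and eps: "0 < eps"
  shows "(\<integral>\<omega>. erlang_exp_ccdf (m - 1) b0 b1 (eps * X \<omega>) \<partial>M)
    = (\<Sum>j\<in>{0::nat, 1}. \<Sum>k = 1..alph m j. coefA m b0 b1 j k / bet b0 b1 j ^ k *
         (\<Sum>l<k. (- (bet b0 b1 j * eps)) ^ l / fact l *
            (deriv ^^ l) (laplace_tr M X) (bet b0 b1 j * eps)))"
proof -
  have u: "0 < bet b0 b1 j * eps" for j
    using b0 b1 eps by (simp add: bet_def)
  have b0_ne: "b0 \<noteq> 0" and b1_ne: "b1 \<noteq> 0"
    using b0 b1 by simp_all
  have summand: "exp_taylor k (bet b0 b1 j * (eps * X \<omega>)) * exp (- bet b0 b1 j * (eps * X \<omega>))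
      = (\<Sum>l<k. (- (bet b0 b1 j * eps)) ^ l / fact l *
           ((- X \<omega>) ^ l * exp (- (bet b0 b1 j * eps) * X \<omega>)))" for j k \<omega>
    using exp_taylor_mult_exp_eq_sum[of k "bet b0 b1 j * eps" "X \<omega>"] by (simp add: mult.assoc)
  have "(\<integral>\<omega>. erlang_exp_ccdf (m - 1) b0 b1 (eps * X \<omega>) \<partial>M)
      = (\<integral>\<omega>. (\<Sum>j\<in>{0::nat, 1}. \<Sum>k = 1..alph m j. coefA m b0 b1 j k / bet b0 b1 j ^ k *
           (\<Sum>l<k. (- (bet b0 b1 j * eps)) ^ l / fact l *
              ((- X \<omega>) ^ l * exp (- (bet b0 b1 j * eps) * X \<omega>)))) \<partial>M)"
    unfolding erlang_exp_ccdf_eq_coefA_sum[OF m ne b0_ne b1_ne] summand ..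
  also have "\<dots> = (\<Sum>j\<in>{0::nat, 1}. \<Sum>k = 1..alph m j. coefA m b0 b1 j k / bet b0 b1 j ^ k *
         (\<Sum>l<k. (- (bet b0 b1 j * eps)) ^ l / fact l *
            (\<integral>\<omega>. (- X \<omega>) ^ l * exp (- (bet b0 b1 j * eps) * X \<omega>) \<partial>M)))"
    using integrable_laplace_moment[OF M X_meas X_pos u]
    by (simp add: Bochner_Integration.integral_sum integrable_sum)
  also have "\<dots> = (\<Sum>j\<in>{0::nat, 1}. \<Sum>k = 1..alph m j. coefA m b0 b1 j k / bet b0 b1 j ^ k *
         (\<Sum>l<k. (- (bet b0 b1 j * eps)) ^ l / fact l *
            (deriv ^^ l) (laplace_tr M X) (bet b0 b1 j * eps)))"
    using higher_deriv_laplace_tr[OF M X_meas X_pos u] by simp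
  finally show ?thesis .
qed

theorem lemma5:
  fixes M :: "'a measure"
    and G0 G1 I2 :: "'a \<Rightarrow> real"
    and lam Rc H alphaL alphaN eps r0 r1 :: real
    and mL :: nat
  assumes "prob_space M"
    and "lam > 0" and "Rc > 0" and "H > 0" and "alphaL > 0" and "alphaN > 2"
    and "mL > 0" and "eps > 0"
    and "0 \<le> r0" and "r0 \<le> Rc" and "r1 > Rc - r0"
    and "distributed M lborel G0 (\<lambda>x. ennreal (erlang_density (mL - 1) (real mL) x))"
    and "distributed M lborel G1 (\<lambda>x. ennreal (exponential_density 1 x))"
    and "prob_space.indep_vars M (\<lambda>_. borel)
           (\<lambda>i::nat. if i = 0 then G0 else if i = 1 then G1 else I2) {0, 1, 2}"
    and "AE \<omega> in M. I2 \<omega> > 0"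
  defines "b0 \<equiv> real mL * (H\<^sup>2 + r0\<^sup>2) powr (alphaL / 2)"
    and "b1 \<equiv> r1 powr alphaN"
  assumes "b0 \<noteq> b1"
  shows "measure M {\<omega> \<in> space M.
            (G0 \<omega> * (H\<^sup>2 + r0\<^sup>2) powr (- alphaL / 2) + G1 \<omega> * r1 powr (- alphaN)) / I2 \<omega> > eps}
         = (\<Sum>j\<in>{0::nat, 1}. \<Sum>k = 1..alph mL j.
              coefA mL b0 b1 j k / bet b0 b1 j ^ k *
              (\<Sum>l<k. (- (bet b0 b1 j * eps)) ^ l / fact l *
                 (deriv ^^ l) (laplace_tr M I2) (bet b0 b1 j * eps)))"
proof -
  interpret prob_space M by fact
  have r1: "0 < r1" and HR: "0 < H\<^sup>2 + r0\<^sup>2"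
    using assms by (auto simp: add_pos_nonneg)
  have b0: "0 < b0" and b1: "0 < b1"
    using assms HR r1 by (simp_all add: b0_def b1_def)
  have "(H\<^sup>2 + r0\<^sup>2) powr (- alphaL / 2) = real mL / b0" and "r1 powr (- alphaN) = 1 / b1"
    using assms HR by (simp_all add: b0_def b1_def powr_minus_divide)
  then have "measure M {\<omega> \<in> space M.
            (G0 \<omega> * (H\<^sup>2 + r0\<^sup>2) powr (- alphaL / 2) + G1 \<omega> * r1 powr (- alphaN)) / I2 \<omega> > eps}
      = prob {\<omega> \<in> space M. eps < (real mL / b0 * G0 \<omega> + 1 / b1 * G1 \<omega>) / I2 \<omega>}"
    by (simp add: mult.commute)
  also have "\<dots> = (\<integral>\<omega>. erlang_exp_ccdf (mL - 1) b0 b1 (eps * I2 \<omega>) \<partial>M)"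
    using prob_weighted_sum_ratio_gt[OF assms(14,12,13,15), where a="real mL / b0" and b="1 / b1"]
      assms b0 b1 by simp
  moreover have "I2 \<in> borel_measurable M"
    using assms(14) by (auto simp: indep_vars_def)
  ultimately show ?thesis
    using integral_erlang_exp_ccdf_eq_laplace_sum[OF finite_measure_axioms _ assms(15)] assms b0 b1
    by simp
qed

end
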